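(* In the setting described in the context, let $\phi,\phi_0\in\Gamma$ be, respectively, a quasi-lower solution and a quasi-upper solution of the wave equation $(W)$, with $\phi(t)\le\phi_0(t)$ for all $t\in\mathbb{R}$. Let $\phi_1:=G(H(\phi_0))$. Then (i) $\phi_1\in\Gamma$; and (ii) $\phi_1$ is an upper solution of $(W)$ and $\phi(t)\le\phi_1(t)\le\phi_0(t)$ for all $t\in\mathbb{R}$.
   Context: Fix $n\ge1$, $\tau\ge0$, a wave speed $c>0$, $D=\mathrm{diag}(d_1,\dots,d_n)$ with all $d_i>0$, and $\mathbf K=(K_1,\dots,K_n)^T$ with all $K_i>0$. Vectors in $\mathbb{R}^n$ are ordered componentwise: $x\le y$ iff $x_i\le y_i$ for all $i$; $[\mathbf 0,\mathbf K]=\{v:\mathbf 0\le v\le\mathbf K\}$. Let $f:C([-\tau,0],\mathbb{R}^n)\to\mathbb{R}^n$ be continuous with $f(\hat 0)=f(\hat K)=0$ and $f(\hat u)\neq0$ for every $u\in[\mathbf 0,\mathbf K]\setminus\{\mathbf 0,\mathbf K\}$, where $\hat u$ denotes the constant function with value $u$. Let $X_c=C([-c\tau,0],\mathbb{R}^n)$ and $f_c:X_c\to\mathbb{R}^n$, $f_c(\psi)=f(\psi^c)$ with $\psi^c(\theta)=\psi(c\theta)$, $\theta\in[-\tau,0]$. For $\phi\in C(\mathbb{R},\mathbb{R}^n)$ and $t\in\mathbb{R}$, $\phi_t\in X_c$ is $\phi_t(s)=\phi(t+s)$. The wave equation is $$D\phi''(t)-c\phi'(t)+f_c(\phi_t)=\mathbf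 0,\quad t\in\mathbb{R}.\tag{W}$$ Assume there is $\beta=\mathrm{diag}(\beta_1,\dots,\beta_n)$ with all $\beta_i>0$ such that $f_c(\phi)-f_c(\psi)+\beta[\phi(0)-\psi(0)]\ge\mathbf 0$ whenever $\phi,\psi\in X_c$ with $\mathbf 0\le\psi(\theta)\le\phi(\theta)\le\mathbf K$ for all $\theta$. Define $H(\phi)(t)=f_c(\phi_t)+\beta\phi(t)$. Let $\Gamma$ be the set of nondecreasing $\varphi\in C(\mathbb{R},\mathbb{R}^n)$ with $\lim_{t\to-\infty}\varphi(t)=\mathbf 0$ and $\lim_{t\to+\infty}\varphi(t)=\mathbf K$. For $i=1,\dots,n$ let $\lambda_{1i}=\frac{c-\sqrt{c^2+4\beta_id_i}}{2d_i}<0<\lambda_{2i}=\frac{c+\sqrt{c^2+4\beta_id_i}}{2d_i}$. For bounded $h:\mathbb{R}\to\mathbb{R}^n$, $G(h)$ is the unique bounded $C^1$ solution of $Dx''-cx'-\beta x+h=\mathbf 0$, given componentwise by $G_i(h)(t)=\frac{1}{d_i(\lambda_{2i}-\lambda_{1i})}\big(\int_{-\infty}^te^{\lambda_{1i}(t-s)}h_i(s)ds+\int_t^\infty e^{\lambda_{2i}(t-s)}h_i(s)ds\big)$. An upper solution of (W) is $\rho\in C^2(\mathbb{R},\mathbb{R}^n)$ with $\rho,\rho',\rho''$ bounded and $D\rho''(t)-c\rho'(t)+f_c(\rho_t)\le\mathbf 0$ for all $t$. A quasi-upper solution of (W) is $\rho\in C^1(\mathbb{R},\mathbb{R}^n)$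 with $\rho,\rho'$ bounded on $\mathbb{R}$, $\rho''$ existing, continuous and bounded on $\mathbb{R}\setminus\{0\}$ with one-sided limits at $0$, and $D\rho''(t)-c\rho'(t)+f_c(\rho_t)\le\mathbf 0$ for all $t\ne0$. Quasi-lower solutions are defined the same way with the inequality reversed ($\ge\mathbf 0$). *)

theory Defs
  imports "HOL-Analysis.Analysis"
begin

text \<open>Vectors in R^n are modelled as real^'n with 'n a finite index type; the order on
real^'n is the library's componentwise order. Elements of C([-a,0],R^n) are modelled as
functions real => real^'n, of which only the values on [-a,0] matter.
Diagonal matrices D and beta are modelled by their diagonal vectors d and beta.\<close>

definition vmul :: "real^'n \<Rightarrow> real^'n \<Rightarrow> real^'n" where
  "vmul a x = (\<chi> i. a$i * x$i)"

definition const_fun :: "real^'n \<Rightarrow> (real \<Rightarrow> real^'n)" where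
  "const_fun u = (\<lambda>\<theta>. u)"

definition local_functional :: "real \<Rightarrow> ((real \<Rightarrow> real^'n) \<Rightarrow> real^'n) \<Rightarrow> bool" where
  "local_functional \<tau> f \<longleftrightarrow>
     (\<forall>\<phi> \<psi>. (\<forall>\<theta>\<in>{-\<tau>..0}. \<phi> \<theta> = \<psi> \<theta>) \<longrightarrow> f \<phi> = f \<psi>)"

definition continuous_functional :: "real \<Rightarrow> ((real \<Rightarrow> real^'n) \<Rightarrow> real^'n) \<Rightarrow> bool" where
  "continuous_functional \<tau> f \<longleftrightarrow>
     (\<forall>\<phi>. continuous_on {-\<tau>..0} \<phi> \<longrightarrow>
        (\<forall>\<epsilon>>0. \<exists>\<delta>>0. \<forall>\<psi>. continuous_on {-\<tau>..0} \<psi> \<and>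
            (\<forall>\<theta>\<in>{-\<tau>..0}. dist (\<psi> \<theta>) (\<phi> \<theta>) < \<delta>) \<longrightarrow> dist (f \<psi>) (f \<phi>) < \<epsilon>))"

definition fc :: "((real \<Rightarrow> real^'n) \<Rightarrow> real^'n) \<Rightarrow> real \<Rightarrow> (real \<Rightarrow> real^'n) \<Rightarrow> real^'n" where
  "fc f c \<psi> = f (\<lambda>\<theta>. \<psi> (c * \<theta>))"

definition shift :: "(real \<Rightarrow> real^'n) \<Rightarrow> real \<Rightarrow> (real \<Rightarrow> real^'n)" where
  "shift \<phi> t = (\<lambda>s. \<phi> (t + s))"

definition Hop :: "((real \<Rightarrow> real^'n) \<Rightarrow> real^'n) \<Rightarrow> real \<Rightarrow> real^'n \<Rightarrow> (real \<Rightarrow> real^'n) \<Rightarrow> (real \<Rightarrow> real^'n)" where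
  "Hop f c \<beta> \<phi> = (\<lambda>t. fc f c (shift \<phi> t) + vmul \<beta> (\<phi> t))"

definition lam1 :: "real \<Rightarrow> real \<Rightarrow> real \<Rightarrow> real" where
  "lam1 c b d = (c - sqrt (c\<^sup>2 + 4 * b * d)) / (2 * d)"

definition lam2 :: "real \<Rightarrow> real \<Rightarrow> real \<Rightarrow> real" where
  "lam2 c b d = (c + sqrt (c\<^sup>2 + 4 * b * d)) / (2 * d)"

definition Gop :: "real \<Rightarrow> real^'n \<Rightarrow> real^'n \<Rightarrow> (real \<Rightarrow> real^'n) \<Rightarrow> (real \<Rightarrow> real^'n)" where
  "Gop c \<beta> d h = (\<lambda>t. \<chi> i.
     1 / (d$i * (lam2 c (\<beta>$i) (d$i) - lam1 c (\<beta>$i) (d$i))) *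
     (integral {..t} (\<lambda>s. exp (lam1 c (\<beta>$i) (d$i) * (t - s)) * h s $ i)
      + integral {t..} (\<lambda>s. exp (lam2 c (\<beta>$i) (d$i) * (t - s)) * h s $ i)))"

definition Gamma_set :: "real^'n \<Rightarrow> (real \<Rightarrow> real^'n) set" where
  "Gamma_set K = {\<phi>. continuous_on UNIV \<phi> \<and> mono \<phi> \<and>
                       (\<phi> \<longlongrightarrow> 0) at_bot \<and> (\<phi> \<longlongrightarrow> K) at_top}"

definition wave_lhs ::
  "((real \<Rightarrow> real^'n) \<Rightarrow> real^'n) \<Rightarrow> real \<Rightarrow> real^'n \<Rightarrow> (real \<Rightarrow> real^'n) \<Rightarrow> real^'n \<Rightarrow> real^'n \<Rightarrow> real \<Rightarrow> real^'n" where
  "wave_lhs f c d \<rho> \<rho>1 \<rho>2 t = vmul d \<rho>2 - c *\<^sub>R \<rho>1 + fc f c (shift \<rho> t)"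

definition upper_solution ::
  "((real \<Rightarrow> real^'n) \<Rightarrow> real^'n) \<Rightarrow> real \<Rightarrow> real^'n \<Rightarrow> (real \<Rightarrow> real^'n) \<Rightarrow> bool" where
  "upper_solution f c d \<rho> \<longleftrightarrow>
     (\<exists>\<rho>' \<rho>''. (\<forall>t. (\<rho> has_vector_derivative \<rho>' t) (at t)) \<and>
               (\<forall>t. (\<rho>' has_vector_derivative \<rho>'' t) (at t)) \<and>
               continuous_on UNIV \<rho>'' \<and>
               bounded (range \<rho>) \<and> bounded (range \<rho>') \<and> bounded (range \<rho>'') \<and>
               (\<forall>t. wave_lhs f c d \<rho> (\<rho>' t) (\<rho>'' t) t \<le> 0))"

definition quasi_solution_regular :: "(real \<Rightarrow> real^'n) \<Rightarrow> (real \<Rightarrow> real^'n) \<Rightarrow> (real \<Rightarrow> real^'n) \<Rightarrow> bool" where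
  "quasi_solution_regular \<rho> \<rho>' \<rho>'' \<longleftrightarrow>
     (\<forall>t. (\<rho> has_vector_derivative \<rho>' t) (at t)) \<and> continuous_on UNIV \<rho>' \<and>
     bounded (range \<rho>) \<and> bounded (range \<rho>') \<and>
     (\<forall>t. t \<noteq> 0 \<longrightarrow> (\<rho>' has_vector_derivative \<rho>'' t) (at t)) \<and>
     continuous_on (- {0}) \<rho>'' \<and> bounded (\<rho>'' ` (- {0})) \<and>
     (\<exists>L. (\<rho>'' \<longlongrightarrow> L) (at_left 0)) \<and> (\<exists>R. (\<rho>'' \<longlongrightarrow> R) (at_right 0))"

definition quasi_upper_solution ::
  "((real \<Rightarrow> real^'n) \<Rightarrow> real^'n) \<Rightarrow> real \<Rightarrow> real^'n \<Rightarrow> (real \<Rightarrow> real^'n) \<Rightarrow> bool" where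
  "quasi_upper_solution f c d \<rho> \<longleftrightarrow>
     (\<exists>\<rho>' \<rho>''. quasi_solution_regular \<rho> \<rho>' \<rho>'' \<and>
               (\<forall>t. t \<noteq> 0 \<longrightarrow> wave_lhs f c d \<rho> (\<rho>' t) (\<rho>'' t) t \<le> 0))"

definition quasi_lower_solution ::
  "((real \<Rightarrow> real^'n) \<Rightarrow> real^'n) \<Rightarrow> real \<Rightarrow> real^'n \<Rightarrow> (real \<Rightarrow> real^'n) \<Rightarrow> bool" where
  "quasi_lower_solution f c d \<rho> \<longleftrightarrow>
     (\<exists>\<rho>' \<rho>''. quasi_solution_regular \<rho> \<rho>' \<rho>'' \<and>
               (\<forall>t. t \<noteq> 0 \<longrightarrow> wave_lhs f c d \<rho> (\<rho>' t) (\<rho>'' t) t \<ge> 0))"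

end

theory Submission
  imports Defs
begin

(* Componentwise, G h is the unique bounded solution x of d x'' - c x' - beta x + h = 0; it is
   built from the two exponential kernels whose rates lam1 < 0 < lam2 are the roots of
   d r^2 - c r - beta.  A maximum principle (a function that is bounded below and satisfies
   d u'' - c u' - beta u <= 0 off finitely many points is nonnegative; perturbing by eps cosh (mu t)
   forces a global minimum) compares G h with super- and subsolutions.  Hence G is order-preserving,
   G h is increasing when h is, and G (H phi0) <= phi0, phi <= G (H phi).  Quasi-monotonicity makes
   H order-preserving on functions with values in [0, K], so phi <= G (H phi) <= G (H phi0) <= phi0
   and G (H phi0) lies in Gamma by squeezing; finally, with phi1 = G (H phi0),
   D phi1'' - c phi1' + f_c(phi1_t) = H phi1 - H phi0 <= 0. *)

section \<open>Maximum principle\<close>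

lemma continuous_attains_global_min:
  fixes v :: "real \<Rightarrow> real"
  assumes "continuous_on UNIV v" and "\<And>x. R < \<bar>x\<bar> \<Longrightarrow> v t \<le> v x"
  obtains t0 where "\<And>x. v t0 \<le> v x"
proof -
  define R' where "R' = max R \<bar>t\<bar>"
  have "\<exists>t0\<in>{- R'..R'}. \<forall>x\<in>{- R'..R'}. v t0 \<le> v x"
    by (intro continuous_attains_inf continuous_on_subset[OF assms(1)]) (auto simp: R'_def)
  then obtain t0 where t0: "t0 \<in> {- R'..R'}" "\<And>x. x \<in> {- R'..R'} \<Longrightarrow> v t0 \<le> v x"
    by blast
  have "v t0 \<le> v x" for x
  proof (cases "x \<in> {- R'..R'}")
    case False
    then have "t \<in> {- R'..R'}" "R < \<bar>x\<bar>" by (auto simp: R'_def)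
    then show ?thesis using t0(2) assms(2) by (meson order_trans)
  qed (use t0 in blast)
  then show thesis ..
qed

lemma nonneg_at_global_min:
  fixes v v' v'' :: "real \<Rightarrow> real"
  assumes d: "d > 0" and \<beta>: "\<beta> > 0" and S: "finite S"
    and v: "\<And>t. (v has_real_derivative v' t) (at t)" "continuous_on UNIV v'"
      "\<And>t. t \<notin> S \<Longrightarrow> (v' has_real_derivative v'' t) (at t)"
    and super: "\<And>t. t \<notin> S \<Longrightarrow> d * v'' t - c * v' t - \<beta> * v t \<le> 0"
    and min: "\<And>t. v t0 \<le> v t"
  shows "0 \<le> v t0"
proof (rule ccontr)
  assume "\<not> 0 \<le> v t0"
  moreover have "v' t0 = 0"
    using min by (intro DERIV_local_min[OF v(1), of 1]) auto
  ultimately have neg: "c * v' t0 + \<beta> * v t0 < 0"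
    using \<beta> by (simp add: mult_pos_neg)
  have "isCont (\<lambda>t. c * v' t + \<beta> * v t) t0"
    using v(2) DERIV_isCont[OF v(1)] by (intro continuous_intros) (auto simp: continuous_on_eq_continuous_at)
  from order_tendstoD(2)[OF this[unfolded isCont_def] neg]
  obtain \<delta>1 where \<delta>1: "\<delta>1 > 0" "\<And>t. t \<noteq> t0 \<Longrightarrow> dist t t0 < \<delta>1 \<Longrightarrow> c * v' t + \<beta> * v t < 0"
    unfolding eventually_at by blast
  obtain \<delta>2 where \<delta>2: "\<delta>2 > 0" "\<And>x. x \<in> S \<Longrightarrow> x \<noteq> t0 \<Longrightarrow> \<delta>2 \<le> dist t0 x"
    using finite_set_avoid[OF S, of t0] by blast
  \<comment> \<open>On (t0, s] there is no point of S and d v'' \<le> c v' + \<beta> v < 0, so v' and then v decrease.\<close>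
  define s where "s = t0 + min \<delta>1 \<delta>2 / 2"
  have right_of_t0: "x \<notin> S \<and> v'' x < 0" if "t0 < x" "x \<le> s" for x
  proof
    have "dist t0 x < \<delta>2" "dist x t0 < \<delta>1"
      using that \<delta>1(1) \<delta>2(1) by (auto simp: s_def dist_real_def)
    then show "x \<notin> S"
      using \<delta>2(2)[of x] that by fastforce
    then have "d * v'' x \<le> c * v' x + \<beta> * v x"
      using super[of x] by simp
    also have "\<dots> < 0"
      using \<delta>1(2)[of x] \<open>dist x t0 < \<delta>1\<close> that by simp
    finally show "v'' x < 0"
      using d by (simp add: mult_less_0_iff)
  qed
  have v'_neg: "v' x < 0" if "t0 < x" "x \<le> s" for x
  proof -
    have "v' x < v' t0"
    proof (rule DERIV_neg_imp_decreasing_open[OF \<open>t0 < x\<close>])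
      show "\<exists>D. (v' has_real_derivative D) (at y) \<and> D < 0" if "t0 < y" "y < x" for y
        using right_of_t0[of y] v(3)[of y] that \<open>x \<le> s\<close> by auto
      show "continuous_on {t0..x} v'"
        using v(2) by (rule continuous_on_subset) simp
    qed
    then show ?thesis using \<open>v' t0 = 0\<close> by simp
  qed
  have "t0 < s"
    using \<delta>1(1) \<delta>2(1) by (simp add: s_def)
  then have "v s < v t0"
  proof (rule DERIV_neg_imp_decreasing_open)
    show "\<exists>D. (v has_real_derivative D) (at y) \<and> D < 0" if "t0 < y" "y < s" for y
      using v(1)[of y] v'_neg[of y] that by auto
    show "continuous_on {t0..s} v"
      using v(1) by (meson DERIV_isCont continuous_at_imp_continuous_on)
  qed
  then show False using min[of s] by simp
qed

lemma abs_le_two_cosh: "\<bar>y\<bar> \<le> 2 * cosh (y :: real)"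
proof -
  have "\<bar>y\<bar> \<le> exp \<bar>y\<bar>"
    using exp_ge_add_one_self[of "\<bar>y\<bar>"] by linarith
  also have "\<dots> \<le> exp \<bar>y\<bar> + exp (- \<bar>y\<bar>)"
    by simp
  also have "\<dots> = 2 * cosh \<bar>y\<bar>"
    by (simp add: cosh_field_def)
  finally show ?thesis
    by simp
qed

lemma supersolution_nonneg:
  fixes u u' u'' :: "real \<Rightarrow> real"
  assumes d: "d > 0" and \<beta>: "\<beta> > 0" and S: "finite S"
    and u: "\<And>t. (u has_real_derivative u' t) (at t)" "continuous_on UNIV u'"
      "\<And>t. t \<notin> S \<Longrightarrow> (u' has_real_derivative u'' t) (at t)"
    and bdd: "bdd_below (range u)"
    and super: "\<And>t. t \<notin> S \<Longrightarrow> d * u'' t - c * u' t - \<beta> * u t \<le> 0"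
  shows "0 \<le> u t"
proof (rule ccontr)
  assume "\<not> 0 \<le> u t"
  obtain M where M: "\<And>x. M \<le> u x"
    using bdd by (auto simp: bdd_below_def)
  \<comment> \<open>For small \<mu>, cosh (\<mu> x) is a supersolution; adding a small multiple of it keeps
    u negative somewhere but makes it tend to infinity, so a global minimum exists.\<close>
  define \<mu> where "\<mu> = min 1 (\<beta> / (d + \<bar>c\<bar>))"
  have \<mu>: "0 < \<mu>" "d * \<mu>\<^sup>2 + \<bar>c\<bar> * \<mu> \<le> \<beta>"
  proof -
    show "0 < \<mu>" using d \<beta> by (simp add: \<mu>_def add_pos_nonneg)
    have "\<mu> * \<mu> \<le> \<mu> * 1"
      using \<open>0 < \<mu>\<close> by (intro mult_left_mono) (auto simp: \<mu>_def)
    then have "d * \<mu>\<^sup>2 \<le> d * \<mu>"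
      using d by (simp add: power2_eq_square)
    moreover have "(d + \<bar>c\<bar>) * \<mu> \<le> (d + \<bar>c\<bar>) * (\<beta> / (d + \<bar>c\<bar>))"
      using d by (intro mult_left_mono) (auto simp: \<mu>_def)
    moreover have "(d + \<bar>c\<bar>) * (\<beta> / (d + \<bar>c\<bar>)) = \<beta>"
      using d by (simp add: add_pos_nonneg)
    ultimately show "d * \<mu>\<^sup>2 + \<bar>c\<bar> * \<mu> \<le> \<beta>"
      by (simp add: distrib_right)
  qed
  define \<epsilon> where "\<epsilon> = - u t / (2 * cosh (\<mu> * t))"
  have \<epsilon>: "0 < \<epsilon>"
    using \<open>\<not> 0 \<le> u t\<close> by (simp add: \<epsilon>_def divide_neg_pos)
  define v where "v x = u x + \<epsilon> * cosh (\<mu> * x)" for x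
  define v' where "v' x = u' x + \<epsilon> * \<mu> * sinh (\<mu> * x)" for x
  define v'' where "v'' x = u'' x + \<epsilon> * \<mu>\<^sup>2 * cosh (\<mu> * x)" for x
  have v: "\<And>x. (v has_real_derivative v' x) (at x)" "continuous_on UNIV v'"
    "\<And>x. x \<notin> S \<Longrightarrow> (v' has_real_derivative v'' x) (at x)"
  proof -
    show "(v has_real_derivative v' x) (at x)" for x
      unfolding v_def v'_def by (auto intro!: derivative_eq_intros u(1))
    show "continuous_on UNIV v'"
      unfolding v'_def by (intro continuous_intros u(2))
    show "(v' has_real_derivative v'' x) (at x)" if "x \<notin> S" for x
      unfolding v'_def v''_def by (auto intro!: derivative_eq_intros u(3)[OF that] simp: power2_eq_square)
  qed
  have v_super: "d * v'' x - c * v' x - \<beta> * v x \<le> 0" if "x \<notin> S" for x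
  proof -
    have "\<bar>sinh (\<mu> * x)\<bar> \<le> cosh (\<mu> * x)"
      using sinh_le_cosh_real[of "\<mu> * x"] sinh_le_cosh_real[of "- (\<mu> * x)"] by (simp add: abs_le_iff)
    then have "- c * sinh (\<mu> * x) \<le> \<bar>c\<bar> * cosh (\<mu> * x)"
      using abs_ge_minus_self[of "c * sinh (\<mu> * x)"] mult_left_mono[of _ _ "\<bar>c\<bar>"]
      by (fastforce simp: abs_mult)
    then have "\<mu> * (- c * sinh (\<mu> * x)) \<le> \<mu> * (\<bar>c\<bar> * cosh (\<mu> * x))"
      using \<mu>(1) by (intro mult_left_mono) auto
    then have "\<epsilon> * (d * \<mu>\<^sup>2 * cosh (\<mu> * x) - c * \<mu> * sinh (\<mu> * x) - \<beta> * cosh (\<mu> * x))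
        \<le> \<epsilon> * ((d * \<mu>\<^sup>2 + \<bar>c\<bar> * \<mu> - \<beta>) * cosh (\<mu> * x))"
      using \<epsilon> by (intro mult_left_mono) (auto simp: algebra_simps)
    also have "\<dots> \<le> 0"
      using \<epsilon> \<mu>(2) by (intro mult_nonneg_nonpos mult_nonpos_nonneg) auto
    finally show ?thesis
      using super[OF that] by (simp add: v_def v'_def v''_def algebra_simps)
  qed
  have "v t < 0"
    using \<open>\<not> 0 \<le> u t\<close> by (simp add: v_def \<epsilon>_def)
  have grow: "v t \<le> v x" if "2 * \<bar>M\<bar> / (\<epsilon> * \<mu>) < \<bar>x\<bar>" for x
  proof -
    have "2 * \<bar>M\<bar> < \<epsilon> * (\<mu> * \<bar>x\<bar>)"
      using that \<epsilon> \<mu>(1) by (simp add: field_simps)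
    also have "\<dots> \<le> \<epsilon> * (2 * cosh (\<mu> * x))"
      using abs_le_two_cosh[of "\<mu> * x"] \<epsilon> \<mu>(1) by (simp add: abs_mult)
    finally show ?thesis
      using M[of x] \<open>v t < 0\<close> by (simp add: v_def)
  qed
  have "continuous_on UNIV v"
    using v(1) by (meson DERIV_isCont continuous_at_imp_continuous_on)
  then obtain t0 where min: "\<And>x. v t0 \<le> v x"
    using continuous_attains_global_min grow by blast
  have "0 \<le> v t0"
    by (rule nonneg_at_global_min[OF d \<beta> S v v_super min])
  then show False
    using min[of t] \<open>v t < 0\<close> by linarith
qed

section \<open>Exponential convolutions\<close>

lemma has_integral_exp_kernel_atLeast:
  fixes b t :: real
  assumes "b > 0"
  shows "((\<lambda>s. exp (b * (t - s))) has_integral 1 / b) {t..}"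
proof -
  have "((\<lambda>s. exp (b * t) * exp (- b * s)) has_integral exp (b * t) * (exp (- b * t) / b)) {t..}"
    by (intro has_integral_mult_right has_integral_exp_minus_to_infinity assms)
  moreover have "exp (b * t) * (exp (- b * t) / b) = 1 / b"
    by (simp add: exp_minus field_simps)
  ultimately show ?thesis
    by (simp add: mult_exp_exp algebra_simps)
qed

definition exp_conv_atLeast :: "real \<Rightarrow> (real \<Rightarrow> real) \<Rightarrow> real \<Rightarrow> real" where
  "exp_conv_atLeast b h t = integral {t..} (\<lambda>s. exp (b * (t - s)) * h s)"

definition exp_conv_atMost :: "real \<Rightarrow> (real \<Rightarrow> real) \<Rightarrow> real \<Rightarrow> real" where
  "exp_conv_atMost a h t = integral {..t} (\<lambda>s. exp (a * (t - s)) * h s)"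

lemma exp_conv_atLeast_absolutely_integrable:
  fixes h :: "real \<Rightarrow> real"
  assumes b: "b > 0" and h: "continuous_on UNIV h" "\<And>s. \<bar>h s\<bar> \<le> M"
  shows "(\<lambda>s. exp (b * (t - s)) * h s) absolutely_integrable_on {t..}"
proof (rule measurable_bounded_by_integrable_imp_absolutely_integrable)
  show "(\<lambda>s. exp (b * (t - s)) * h s) \<in> borel_measurable (lebesgue_on {t..})"
    by (intro continuous_imp_measurable_on_sets_lebesgue continuous_intros continuous_on_subset[OF h(1)]) auto
  show "(\<lambda>s. M * exp (b * (t - s))) integrable_on {t..}"
    using has_integral_mult_right[OF has_integral_exp_kernel_atLeast[OF b]] by blast
  show "norm (exp (b * (t - s)) * h s) \<le> M * exp (b * (t - s))" for s
    using h(2)[of s] by (simp add: abs_mult mult.commute)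
qed simp

lemma abs_exp_conv_atLeast_le:
  fixes h :: "real \<Rightarrow> real"
  assumes b: "b > 0" and h: "continuous_on UNIV h" "\<And>s. \<bar>h s\<bar> \<le> M"
  shows "\<bar>exp_conv_atLeast b h t\<bar> \<le> M / b"
proof -
  have "\<bar>exp_conv_atLeast b h t\<bar> \<le> integral {t..} (\<lambda>s. M * exp (b * (t - s)))"
    unfolding exp_conv_atLeast_def real_norm_def[symmetric]
  proof (rule integral_norm_bound_integral)
    show "(\<lambda>s. exp (b * (t - s)) * h s) integrable_on {t..}"
      using exp_conv_atLeast_absolutely_integrable[OF b h] by (rule set_lebesgue_integral_eq_integral(1))
    show "(\<lambda>s. M * exp (b * (t - s))) integrable_on {t..}"
      using has_integral_mult_right[OF has_integral_exp_kernel_atLeast[OF b]] by blast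
    show "norm (exp (b * (t - s)) * h s) \<le> M * exp (b * (t - s))" for s
      using h(2)[of s] by (simp add: abs_mult mult.commute)
  qed
  also have "\<dots> = M / b"
    using integral_unique[OF has_integral_mult_right[OF has_integral_exp_kernel_atLeast[OF b]]] by simp
  finally show ?thesis .
qed

lemma has_real_derivative_integral_atLeast:
  fixes q :: "real \<Rightarrow> real"
  assumes q: "continuous_on UNIV q" and int: "\<And>x. q integrable_on {x..}"
  shows "((\<lambda>x. integral {x..} q) has_real_derivative - q t) (at t)"
proof -
  have split: "integral {x..} q = integral {t - 1..} q - integral {t - 1..x} q" if "t - 1 < x" for x
  proof -
    have "q integrable_on {t - 1..x}"
      by (intro integrable_continuous_interval continuous_on_subset[OF q]) auto
    then have "(q has_integral integral {t - 1..x} q + integral {x..} q) ({t - 1..x} \<union> {x..})"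
      using int by (intro has_integral_Un) (auto intro: negligible_subset[of "{x}"])
    moreover have "{t - 1..x} \<union> {x..} = {t - 1..}" using that by auto
    ultimately show ?thesis
      using int by (simp add: integral_unique)
  qed
  have "((\<lambda>x. integral {t - 1..x} q) has_real_derivative q t) (at t within {t - 1..t + 1})"
    by (intro integral_has_real_derivative continuous_on_subset[OF q]) auto
  then have "((\<lambda>x. integral {t - 1..x} q) has_real_derivative q t) (at t)"
    by (simp add: at_within_Icc_at)
  then have "((\<lambda>x. integral {t - 1..} q - integral {t - 1..x} q) has_real_derivative - q t) (at t)"
    by (auto intro!: derivative_eq_intros)
  then show ?thesis
    by (rule has_field_derivative_transform_within_open[of _ _ _ "{t - 1<..}"]) (auto simp: split)
qed

lemma exp_conv_atLeast_has_real_derivative: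
  fixes h :: "real \<Rightarrow> real"
  assumes b: "b > 0" and h: "continuous_on UNIV h" "\<And>s. \<bar>h s\<bar> \<le> M"
  shows "(exp_conv_atLeast b h has_real_derivative b * exp_conv_atLeast b h t - h t) (at t)"
proof -
  define q where "q s = exp (- b * s) * h s" for s
  have kernel_eq: "exp (b * (x - s)) * h s = exp (b * x) * q s" for x s
    by (simp add: q_def algebra_simps flip: exp_add)
  have conv_eq: "exp_conv_atLeast b h = (\<lambda>x. exp (b * x) * integral {x..} q)"
    by (simp add: exp_conv_atLeast_def kernel_eq fun_eq_iff)
  have "(\<lambda>s. exp (- b * x) * (exp (b * (x - s)) * h s)) integrable_on {x..}" for x
    using exp_conv_atLeast_absolutely_integrable[OF b h]
    by (intro integrable_on_mult_right) (simp add: set_lebesgue_integral_eq_integral)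
  then have q_int: "q integrable_on {x..}" for x
    by (simp add: kernel_eq flip: mult.assoc exp_add)
  have "continuous_on UNIV q"
    unfolding q_def by (intro continuous_intros h(1))
  then have "((\<lambda>x. integral {x..} q) has_real_derivative - q t) (at t)"
    using q_int by (rule has_real_derivative_integral_atLeast)
  then have "((\<lambda>x. exp (b * x) * integral {x..} q) has_real_derivative
      b * (exp (b * t) * integral {t..} q) - exp (b * t) * q t) (at t)"
    by (auto intro!: derivative_eq_intros simp: algebra_simps)
  then show ?thesis
    by (simp add: conv_eq q_def flip: mult.assoc exp_add)
qed

lemma exp_conv_atMost_reflect:
  fixes h :: "real \<Rightarrow> real"
  assumes a: "a < 0" and h: "continuous_on UNIV h" "\<And>s. \<bar>h s\<bar> \<le> M"
  shows "exp_conv_atMost a h t = exp_conv_atLeast (- a) (\<lambda>s. h (- s)) (- t)"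
proof -
  have "continuous_on UNIV (\<lambda>s. h (- s))"
    by (intro continuous_on_compose2[OF h(1)] continuous_intros) auto
  then have "(\<lambda>s. exp (- a * (- t - s)) * h (- s)) absolutely_integrable_on {- t..}"
    using a h(2) by (intro exp_conv_atLeast_absolutely_integrable) auto
  then have "(\<lambda>s. exp (a * (t - s)) * h s) absolutely_integrable_on {..t} \<and>
      integral {..t} (\<lambda>s. exp (a * (t - s)) * h s) = integral {- t..} (\<lambda>s. exp (- a * (- t - s)) * h (- s))"
    by (subst has_absolute_integral_reflect_real[symmetric, where A = "{- t..}"])
       (auto simp: algebra_simps image_iff intro: exI[of _ "- _"])
  then show ?thesis
    by (simp add: exp_conv_atMost_def exp_conv_atLeast_def)
qed

lemma abs_exp_conv_atMost_le:
  fixes h :: "real \<Rightarrow> real"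
  assumes a: "a < 0" and h: "continuous_on UNIV h" "\<And>s. \<bar>h s\<bar> \<le> M"
  shows "\<bar>exp_conv_atMost a h t\<bar> \<le> M / - a"
proof -
  have "continuous_on UNIV (\<lambda>s. h (- s))"
    by (intro continuous_on_compose2[OF h(1)] continuous_intros) auto
  then show ?thesis
    using abs_exp_conv_atLeast_le[of "- a" "\<lambda>s. h (- s)" M "- t"] a h(2)
    by (simp add: exp_conv_atMost_reflect[OF a h])
qed

lemma exp_conv_atMost_has_real_derivative:
  fixes h :: "real \<Rightarrow> real"
  assumes a: "a < 0" and h: "continuous_on UNIV h" "\<And>s. \<bar>h s\<bar> \<le> M"
  shows "(exp_conv_atMost a h has_real_derivative a * exp_conv_atMost a h t + h t) (at t)"
proof -
  have h': "continuous_on UNIV (\<lambda>s. h (- s))" "\<bar>h (- s)\<bar> \<le> M" for s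
    by (auto intro!: continuous_on_compose2[OF h(1)] continuous_on_minus continuous_on_id h(2))
  have "(exp_conv_atLeast (- a) (\<lambda>s. h (- s)) has_real_derivative
      - a * exp_conv_atLeast (- a) (\<lambda>s. h (- s)) (- t) - h t) (at (- t))"
    using exp_conv_atLeast_has_real_derivative[OF _ h', of "- a" "- t"] a by simp
  then have "((\<lambda>x. exp_conv_atLeast (- a) (\<lambda>s. h (- s)) (- x)) has_real_derivative
      (- a * exp_conv_atLeast (- a) (\<lambda>s. h (- s)) (- t) - h t) * - 1) (at t)"
    by (rule DERIV_chain2[where g = uminus]) (auto intro!: derivative_eq_intros)
  moreover have "exp_conv_atMost a h = (\<lambda>x. exp_conv_atLeast (- a) (\<lambda>s. h (- s)) (- x))"
    using exp_conv_atMost_reflect[OF a h] by (simp add: fun_eq_iff)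
  ultimately show ?thesis
    by (simp add: algebra_simps)
qed

section \<open>The scalar Green operator\<close>

lemma lam1_lam2_char_roots:
  assumes d: "d > 0" and \<beta>: "\<beta> > 0"
  shows "lam1 c \<beta> d < 0" and "0 < lam2 c \<beta> d"
    and "d * (lam1 c \<beta> d)\<^sup>2 - c * lam1 c \<beta> d - \<beta> = 0"
    and "d * (lam2 c \<beta> d)\<^sup>2 - c * lam2 c \<beta> d - \<beta> = 0"
proof -
  define r where "r = sqrt (c\<^sup>2 + 4 * \<beta> * d)"
  have r2: "r\<^sup>2 = c\<^sup>2 + 4 * \<beta> * d"
    unfolding r_def using d \<beta> by simp
  have r: "\<bar>c\<bar> < r"
    unfolding r_def using d \<beta> by (intro real_less_rsqrt) simp
  have lam: "lam1 c \<beta> d = (c - r) / (2 * d)" "lam2 c \<beta> d = (c + r) / (2 * d)"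
    by (simp_all add: lam1_def lam2_def r_def)
  show "lam1 c \<beta> d < 0" "0 < lam2 c \<beta> d"
    unfolding lam using d r by (auto intro: divide_neg_pos divide_pos_pos)
  show "d * (lam1 c \<beta> d)\<^sup>2 - c * lam1 c \<beta> d - \<beta> = 0"
    and "d * (lam2 c \<beta> d)\<^sup>2 - c * lam2 c \<beta> d - \<beta> = 0"
    unfolding lam using d r2 by (simp_all add: field_simps power2_eq_square)
qed

definition green :: "real \<Rightarrow> real \<Rightarrow> real \<Rightarrow> (real \<Rightarrow> real) \<Rightarrow> real \<Rightarrow> real" where
  "green c \<beta> d h t =
     (exp_conv_atMost (lam1 c \<beta> d) h t + exp_conv_atLeast (lam2 c \<beta> d) h t) / (d * (lam2 c \<beta> d - lam1 c \<beta> d))"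

lemma bounded_range_mult_left:
  fixes f :: "'a \<Rightarrow> real"
  shows "bounded (range f) \<Longrightarrow> bounded (range (\<lambda>x. r * f x))"
  using bounded_scaleR_comp[of f UNIV r] by simp

lemma green_solution:
  fixes h :: "real \<Rightarrow> real"
  assumes d: "d > 0" and \<beta>: "\<beta> > 0" and h: "continuous_on UNIV h" "bounded (range h)"
  obtains g' g'' where "\<And>t. (green c \<beta> d h has_real_derivative g' t) (at t)"
    and "\<And>t. (g' has_real_derivative g'' t) (at t)"
    and "continuous_on UNIV g'" and "continuous_on UNIV g''"
    and "bounded (range (green c \<beta> d h))" and "bounded (range g')" and "bounded (range g'')"
    and "\<And>t. d * g'' t - c * g' t - \<beta> * green c \<beta> d h t + h t = 0"
proof -
  define a where "a = lam1 c \<beta> d"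
  define b where "b = lam2 c \<beta> d"
  note roots = lam1_lam2_char_roots[OF d \<beta>, of c, folded a_def b_def]
  obtain M where M: "\<And>s. \<bar>h s\<bar> \<le> M"
    using h(2) by (auto simp: bounded_iff)
  define L where "L = exp_conv_atMost a h"
  define R where "R = exp_conv_atLeast b h"
  define k where "k = 1 / (d * (b - a))"
  define g' where "g' t = k * (a * L t + b * R t)" for t
  define g'' where "g'' t = k * (a * (a * L t + h t) + b * (b * R t - h t))" for t
  have L': "(L has_real_derivative a * L t + h t) (at t)" for t
    unfolding L_def by (rule exp_conv_atMost_has_real_derivative[OF roots(1) h(1) M])
  have R': "(R has_real_derivative b * R t - h t) (at t)" for t
    unfolding R_def by (rule exp_conv_atLeast_has_real_derivative[OF roots(2) h(1) M])
  have green_eq: "green c \<beta> d h = (\<lambda>t. k * (L t + R t))"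
    by (simp add: fun_eq_iff green_def L_def R_def a_def b_def k_def)
  have bounded_LR: "bounded (range L)" "bounded (range R)"
    using abs_exp_conv_atMost_le[OF roots(1) h(1) M] abs_exp_conv_atLeast_le[OF roots(2) h(1) M]
    by (auto simp: bounded_iff L_def R_def)
  show thesis
  proof
    show "(green c \<beta> d h has_real_derivative g' t) (at t)" for t
      unfolding green_eq g'_def by (auto intro!: derivative_eq_intros L' R' simp: algebra_simps)
    show "(g' has_real_derivative g'' t) (at t)" for t
      unfolding g'_def g''_def by (auto intro!: derivative_eq_intros L' R' simp: algebra_simps)
    then show "continuous_on UNIV g'"
      by (intro continuous_at_imp_continuous_on ballI DERIV_isCont)
    show "continuous_on UNIV g''"
      unfolding g''_def using L' R'
      by (intro continuous_intros h(1) continuous_at_imp_continuous_on ballI DERIV_isCont) auto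
    show "bounded (range (green c \<beta> d h))" "bounded (range g')" "bounded (range g'')"
      unfolding green_eq g'_def g''_def
      by (intro bounded_range_mult_left bounded_plus_comp bounded_minus_comp bounded_LR h(2))+
    show "d * g'' t - c * g' t - \<beta> * green c \<beta> d h t + h t = 0" for t
    proof -
      have "k * (d * (b - a)) = 1"
        using d roots(1,2) by (simp add: k_def)
      moreover have "d * g'' t - c * g' t - \<beta> * green c \<beta> d h t + h t
          = k * ((d * a\<^sup>2 - c * a - \<beta>) * L t + (d * b\<^sup>2 - c * b - \<beta>) * R t)
            + (1 - k * (d * (b - a))) * h t"
        by (simp add: green_eq g'_def g''_def algebra_simps power2_eq_square)
      ultimately show ?thesis
        using roots(3,4) by simp
    qed
  qed
qed

lemma green_le_supersolution:
  fixes h u u' u'' :: "real \<Rightarrow> real"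
  assumes d: "d > 0" and \<beta>: "\<beta> > 0" and h: "continuous_on UNIV h" "bounded (range h)"
    and S: "finite S"
    and u: "\<And>t. (u has_real_derivative u' t) (at t)" "continuous_on UNIV u'"
      "\<And>t. t \<notin> S \<Longrightarrow> (u' has_real_derivative u'' t) (at t)"
    and bdd: "bdd_below (range u)"
    and super: "\<And>t. t \<notin> S \<Longrightarrow> d * u'' t - c * u' t - \<beta> * u t + h t \<le> 0"
  shows "green c \<beta> d h t \<le> u t"
proof -
  obtain g' g'' where g: "\<And>t. (green c \<beta> d h has_real_derivative g' t) (at t)"
    "\<And>t. (g' has_real_derivative g'' t) (at t)" "bounded (range (green c \<beta> d h))"
    "\<And>t. d * g'' t - c * g' t - \<beta> * green c \<beta> d h t + h t = 0" "continuous_on UNIV g'"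
    using green_solution[OF d \<beta> h] by metis
  obtain M B where M: "\<And>t. M \<le> u t" and B: "\<And>t. \<bar>green c \<beta> d h t\<bar> \<le> B"
    using bdd g(3) by (auto simp: bdd_below_def bounded_iff)
  have lower: "M - B \<le> u t - green c \<beta> d h t" for t
    using M[of t] B[of t] by (simp add: abs_le_iff)
  have "0 \<le> u t - green c \<beta> d h t"
  proof (rule supersolution_nonneg[OF d \<beta> S, where c = c and u = "\<lambda>t. u t - green c \<beta> d h t"
        and u' = "\<lambda>t. u' t - g' t" and u'' = "\<lambda>t. u'' t - g'' t"])
    show "bdd_below (range (\<lambda>t. u t - green c \<beta> d h t))"
      using lower by (rule bdd_belowI2)
    show "continuous_on UNIV (\<lambda>t. u' t - g' t)"
      using u(2) g(5) by (intro continuous_intros)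
    show "((\<lambda>t. u t - green c \<beta> d h t) has_real_derivative u' t - g' t) (at t)" for t
      using u(1) g(1) by (rule DERIV_diff)
    show "((\<lambda>t. u' t - g' t) has_real_derivative u'' t - g'' t) (at t)" if "t \<notin> S" for t
      using u(3)[OF that] g(2) by (rule DERIV_diff)
    show "d * (u'' t - g'' t) - c * (u' t - g' t) - \<beta> * (u t - green c \<beta> d h t) \<le> 0" if "t \<notin> S" for t
      using super[OF that] g(4)[of t] by (simp add: algebra_simps)
  qed
  then show ?thesis by simp
qed

lemma green_uminus: "green c \<beta> d (\<lambda>s. - h s) t = - green c \<beta> d h t"
  by (simp add: green_def exp_conv_atMost_def exp_conv_atLeast_def minus_divide_left)

lemma subsolution_le_green:
  fixes h u u' u'' :: "real \<Rightarrow> real"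
  assumes d: "d > 0" and \<beta>: "\<beta> > 0" and h: "continuous_on UNIV h" "bounded (range h)"
    and S: "finite S"
    and u: "\<And>t. (u has_real_derivative u' t) (at t)" "continuous_on UNIV u'"
      "\<And>t. t \<notin> S \<Longrightarrow> (u' has_real_derivative u'' t) (at t)"
    and bdd: "bdd_above (range u)"
    and sub: "\<And>t. t \<notin> S \<Longrightarrow> 0 \<le> d * u'' t - c * u' t - \<beta> * u t + h t"
  shows "u t \<le> green c \<beta> d h t"
proof -
  have "green c \<beta> d (\<lambda>s. - h s) t \<le> - u t"
  proof (rule green_le_supersolution[OF d \<beta> _ _ S, where u' = "\<lambda>t. - u' t" and u'' = "\<lambda>t. - u'' t"])
    show "continuous_on UNIV (\<lambda>s. - h s)" "bounded (range (\<lambda>s. - h s))"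
      using h by (auto intro: continuous_on_minus)
    show "((\<lambda>t. - u t) has_real_derivative - u' t) (at t)" for t
      using u(1) by (auto intro!: derivative_eq_intros)
    show "((\<lambda>t. - u' t) has_real_derivative - u'' t) (at t)" if "t \<notin> S" for t
      using u(3)[OF that] by (auto intro!: derivative_eq_intros)
    show "continuous_on UNIV (\<lambda>t. - u' t)"
      using u(2) by (intro continuous_intros)
    show "bdd_below (range (\<lambda>t. - u t))"
      using bdd by (simp add: bdd_below_uminus_image)
    show "d * - u'' t - c * - u' t - \<beta> * - u t + - h t \<le> 0" if "t \<notin> S" for t
      using sub[OF that] by simp
  qed
  then show ?thesis
    by (simp add: green_uminus)
qed

lemma green_mono:
  fixes h h' :: "real \<Rightarrow> real"
  assumes d: "d > 0" and \<beta>: "\<beta> > 0"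
    and h: "continuous_on UNIV h" "bounded (range h)"
    and h': "continuous_on UNIV h'" "bounded (range h')"
    and le: "\<And>t. h t \<le> h' t"
  shows "green c \<beta> d h t \<le> green c \<beta> d h' t"
proof -
  obtain g' g'' where g: "\<And>t. (green c \<beta> d h' has_real_derivative g' t) (at t)"
    "\<And>t. (g' has_real_derivative g'' t) (at t)" "bounded (range (green c \<beta> d h'))"
    "\<And>t. d * g'' t - c * g' t - \<beta> * green c \<beta> d h' t + h' t = 0" "continuous_on UNIV g'"
    using green_solution[OF d \<beta> h'] by metis
  show ?thesis
  proof (rule green_le_supersolution[OF d \<beta> h finite.emptyI g(1)])
    show "continuous_on UNIV g'"
      by (rule g(5))
    show "bdd_below (range (green c \<beta> d h'))"
      using g(3) by (rule bounded_imp_bdd_below)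
    show "d * g'' t - c * g' t - \<beta> * green c \<beta> d h' t + h t \<le> 0" for t
      using g(4)[of t] le[of t] by linarith
  qed (use g(2) in auto)
qed

lemma mono_green:
  fixes h :: "real \<Rightarrow> real"
  assumes d: "d > 0" and \<beta>: "\<beta> > 0" and h: "continuous_on UNIV h" "bounded (range h)"
    and "mono h"
  shows "mono (green c \<beta> d h)"
proof (rule monoI)
  fix s t :: real
  assume "s \<le> t"
  obtain g' g'' where g: "\<And>t. (green c \<beta> d h has_real_derivative g' t) (at t)"
    "\<And>t. (g' has_real_derivative g'' t) (at t)" "bounded (range (green c \<beta> d h))"
    "\<And>t. d * g'' t - c * g' t - \<beta> * green c \<beta> d h t + h t = 0" "continuous_on UNIV g'"
    using green_solution[OF d \<beta> h] by metis
  define r where "r = t - s"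
  \<comment> \<open>The translate by r solves the equation with right-hand side h (x + r) \<ge> h x.\<close>
  have "green c \<beta> d h s \<le> green c \<beta> d h (s + r)"
  proof (rule green_le_supersolution[OF d \<beta> h finite.emptyI,
        where u' = "\<lambda>x. g' (x + r)" and u'' = "\<lambda>x. g'' (x + r)"])
    show "((\<lambda>x. green c \<beta> d h (x + r)) has_real_derivative g' (x + r)) (at x)" for x
      using g(1)[of "x + r"] by (simp add: DERIV_shift)
    show "((\<lambda>x. g' (x + r)) has_real_derivative g'' (x + r)) (at x)" for x
      using g(2)[of "x + r"] by (simp add: DERIV_shift)
    show "continuous_on UNIV (\<lambda>x. g' (x + r))"
      by (intro continuous_on_compose2[OF g(5)] continuous_intros) auto
    have "bounded (range (\<lambda>x. green c \<beta> d h (x + r)))"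
      using g(3) by (rule bounded_subset) auto
    then show "bdd_below (range (\<lambda>x. green c \<beta> d h (x + r)))"
      by (rule bounded_imp_bdd_below)
    show "d * g'' (x + r) - c * g' (x + r) - \<beta> * green c \<beta> d h (x + r) + h x \<le> 0" for x
      using g(4)[of "x + r"] monoD[OF \<open>mono h\<close>, of x "x + r"] \<open>s \<le> t\<close> by (simp add: r_def)
  qed
  then show "green c \<beta> d h s \<le> green c \<beta> d h t"
    by (simp add: r_def)
qed

section \<open>The vector Green operator\<close>

lemma Gop_nth: "Gop c \<beta> d h t $ i = green c (\<beta> $ i) (d $ i) (\<lambda>s. h s $ i) t"
  by (simp add: Gop_def green_def exp_conv_atMost_def exp_conv_atLeast_def)

lemma has_real_derivative_vec_nth:
  assumes "(f has_vector_derivative f') F"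
  shows "((\<lambda>x. f x $ i) has_real_derivative f' $ i) F"
  using bounded_linear.has_vector_derivative[OF bounded_linear_vec_nth assms]
  by (simp add: has_real_derivative_iff_has_vector_derivative)

lemma has_vector_derivative_vec_lambda:
  fixes f :: "'n::finite \<Rightarrow> real \<Rightarrow> real"
  assumes "\<And>i. (f i has_real_derivative f' i) (at t)"
  shows "((\<lambda>x. \<chi> i. f i x) has_vector_derivative (\<chi> i. f' i)) (at t)"
proof -
  have sum_axis: "(\<Sum>i\<in>UNIV. x i *\<^sub>R axis i (1::real)) = (\<chi> i. x i)" for x :: "'n \<Rightarrow> real"
    by (simp add: vec_eq_iff axis_def if_distrib cong: if_cong)
  have "(\<lambda>x. \<chi> i. f i x) = (\<lambda>x. \<Sum>i\<in>UNIV. f i x *\<^sub>R axis i 1)"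
    by (simp add: fun_eq_iff sum_axis)
  moreover have "(\<chi> i. f' i) = (\<Sum>i\<in>UNIV. f' i *\<^sub>R axis i 1)"
    by (rule sum_axis[symmetric])
  ultimately show ?thesis
    by (auto intro!: has_vector_derivative_sum derivative_eq_intros assms)
qed

lemma bounded_range_vec_lambda:
  fixes f :: "'n::finite \<Rightarrow> 'a \<Rightarrow> real"
  assumes "\<And>i. bounded (range (f i))"
  shows "bounded (range (\<lambda>x. \<chi> i. f i x))"
proof -
  have "\<forall>i. \<exists>B. \<forall>x. \<bar>f i x\<bar> \<le> B"
    using assms by (auto simp: bounded_iff)
  then obtain B where B: "\<And>i x. \<bar>f i x\<bar> \<le> B i"
    by metis
  have "norm (\<chi> i. f i x) \<le> (\<Sum>i\<in>UNIV. B i)" for x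
    using norm_le_l1_cart[of "\<chi> i. f i x"] sum_mono[of UNIV "\<lambda>i. \<bar>f i x\<bar>" B] B by fastforce
  then show ?thesis
    unfolding bounded_iff by blast
qed

lemma bounded_range_vec_nth: "bounded (range f) \<Longrightarrow> bounded (range (\<lambda>x. f x $ i))"
  using bounded_component_cart[of "range f" i] by (simp add: image_image)

lemma Gop_solution:
  fixes h :: "real \<Rightarrow> real^'n"
  assumes d: "\<forall>i. d $ i > 0" and \<beta>: "\<forall>i. \<beta> $ i > 0"
    and h: "continuous_on UNIV h" "bounded (range h)"
  obtains \<rho>' \<rho>'' where "\<And>t. (Gop c \<beta> d h has_vector_derivative \<rho>' t) (at t)"
    and "\<And>t. (\<rho>' has_vector_derivative \<rho>'' t) (at t)" and "continuous_on UNIV \<rho>''"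
    and "bounded (range (Gop c \<beta> d h))" and "bounded (range \<rho>')" and "bounded (range \<rho>'')"
    and "\<And>t. vmul d (\<rho>'' t) - c *\<^sub>R \<rho>' t - vmul \<beta> (Gop c \<beta> d h t) + h t = 0"
proof -
  have "\<exists>g' g''. (\<forall>t. (green c (\<beta> $ i) (d $ i) (\<lambda>s. h s $ i) has_real_derivative g' t) (at t))
      \<and> (\<forall>t. (g' has_real_derivative g'' t) (at t)) \<and> continuous_on UNIV g''
      \<and> bounded (range (green c (\<beta> $ i) (d $ i) (\<lambda>s. h s $ i))) \<and> bounded (range g') \<and> bounded (range g'')
      \<and> (\<forall>t. d $ i * g'' t - c * g' t - \<beta> $ i * green c (\<beta> $ i) (d $ i) (\<lambda>s. h s $ i) t + h t $ i = 0)" for i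
    by (rule green_solution[of "d $ i" "\<beta> $ i" "\<lambda>s. h s $ i" c])
       (use d \<beta> h in \<open>auto intro: continuous_on_component bounded_range_vec_nth\<close>)
  then obtain g' g'' where g:
    "\<And>i t. (green c (\<beta> $ i) (d $ i) (\<lambda>s. h s $ i) has_real_derivative g' i t) (at t)"
    "\<And>i t. (g' i has_real_derivative g'' i t) (at t)" "\<And>i. continuous_on UNIV (g'' i)"
    "\<And>i. bounded (range (green c (\<beta> $ i) (d $ i) (\<lambda>s. h s $ i)))"
    "\<And>i. bounded (range (g' i))" "\<And>i. bounded (range (g'' i))"
    "\<And>i t. d $ i * g'' i t - c * g' i t - \<beta> $ i * green c (\<beta> $ i) (d $ i) (\<lambda>s. h s $ i) t + h t $ i = 0"
    by metis
  have Gop_eq: "Gop c \<beta> d h = (\<lambda>t. \<chi> i. green c (\<beta> $ i) (d $ i) (\<lambda>s. h s $ i) t)"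
    by (simp add: fun_eq_iff vec_eq_iff Gop_nth)
  show thesis
  proof
    show "(Gop c \<beta> d h has_vector_derivative (\<chi> i. g' i t)) (at t)" for t
      unfolding Gop_eq by (intro has_vector_derivative_vec_lambda g(1))
    show "((\<lambda>t. \<chi> i. g' i t) has_vector_derivative (\<chi> i. g'' i t)) (at t)" for t
      by (intro has_vector_derivative_vec_lambda g(2))
    show "continuous_on UNIV (\<lambda>t. \<chi> i. g'' i t)"
      by (intro continuous_on_vec_lambda g(3))
    show "bounded (range (Gop c \<beta> d h))" "bounded (range (\<lambda>t. \<chi> i. g' i t))"
      "bounded (range (\<lambda>t. \<chi> i. g'' i t))"
      unfolding Gop_eq by (intro bounded_range_vec_lambda g(4-6))+
    show "vmul d (\<chi> i. g'' i t) - c *\<^sub>R (\<chi> i. g' i t) - vmul \<beta> (Gop c \<beta> d h t) + h t = 0" for t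
      using g(7)[of _ t] by (simp add: vec_eq_iff vmul_def Gop_nth)
  qed
qed

lemma quasi_solution_regular_nth:
  assumes "quasi_solution_regular \<rho> \<rho>' \<rho>''"
  shows "\<And>t. ((\<lambda>t. \<rho> t $ i) has_real_derivative \<rho>' t $ i) (at t)"
    and "continuous_on UNIV (\<lambda>t. \<rho>' t $ i)"
    and "\<And>t. t \<notin> {0} \<Longrightarrow> ((\<lambda>t. \<rho>' t $ i) has_real_derivative \<rho>'' t $ i) (at t)"
    and "bounded (range (\<lambda>t. \<rho> t $ i))"
  using assms unfolding quasi_solution_regular_def
  by (auto intro: has_real_derivative_vec_nth continuous_on_component bounded_range_vec_nth)

lemma Gop_le_quasi_supersolution:
  fixes h \<rho> :: "real \<Rightarrow> real^'n"
  assumes d: "\<forall>i. d $ i > 0" and \<beta>: "\<forall>i. \<beta> $ i > 0"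
    and h: "continuous_on UNIV h" "bounded (range h)"
    and \<rho>: "quasi_solution_regular \<rho> \<rho>' \<rho>''"
    and super: "\<And>t. t \<noteq> 0 \<Longrightarrow> vmul d (\<rho>'' t) - c *\<^sub>R \<rho>' t - vmul \<beta> (\<rho> t) + h t \<le> 0"
  shows "Gop c \<beta> d h t \<le> \<rho> t"
  unfolding less_eq_vec_def Gop_nth
proof
  fix i
  show "green c (\<beta> $ i) (d $ i) (\<lambda>s. h s $ i) t \<le> \<rho> t $ i"
  proof (rule green_le_supersolution[OF _ _ _ _ _ quasi_solution_regular_nth(1-3)[OF \<rho>]])
    show "d $ i * \<rho>'' t $ i - c * \<rho>' t $ i - \<beta> $ i * \<rho> t $ i + h t $ i \<le> 0" if "t \<notin> {0}" for t
      using super[of t] that by (simp add: less_eq_vec_def vmul_def)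
    show "bdd_below (range (\<lambda>t. \<rho> t $ i))"
      by (intro bounded_imp_bdd_below quasi_solution_regular_nth(4)[OF \<rho>])
  qed (use d \<beta> h in \<open>auto intro: continuous_on_component bounded_range_vec_nth\<close>)
qed

lemma quasi_subsolution_le_Gop:
  fixes h \<rho> :: "real \<Rightarrow> real^'n"
  assumes d: "\<forall>i. d $ i > 0" and \<beta>: "\<forall>i. \<beta> $ i > 0"
    and h: "continuous_on UNIV h" "bounded (range h)"
    and \<rho>: "quasi_solution_regular \<rho> \<rho>' \<rho>''"
    and sub: "\<And>t. t \<noteq> 0 \<Longrightarrow> 0 \<le> vmul d (\<rho>'' t) - c *\<^sub>R \<rho>' t - vmul \<beta> (\<rho> t) + h t"
  shows "\<rho> t \<le> Gop c \<beta> d h t"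
  unfolding less_eq_vec_def Gop_nth
proof
  fix i
  show "\<rho> t $ i \<le> green c (\<beta> $ i) (d $ i) (\<lambda>s. h s $ i) t"
  proof (rule subsolution_le_green[OF _ _ _ _ _ quasi_solution_regular_nth(1-3)[OF \<rho>]])
    show "0 \<le> d $ i * \<rho>'' t $ i - c * \<rho>' t $ i - \<beta> $ i * \<rho> t $ i + h t $ i" if "t \<notin> {0}" for t
      using sub[of t] that by (simp add: less_eq_vec_def vmul_def)
    show "bdd_above (range (\<lambda>t. \<rho> t $ i))"
      by (intro bounded_imp_bdd_above quasi_solution_regular_nth(4)[OF \<rho>])
  qed (use d \<beta> h in \<open>auto intro: continuous_on_component bounded_range_vec_nth\<close>)
qed

lemma Gop_mono:
  fixes h h' :: "real \<Rightarrow> real^'n"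
  assumes d: "\<forall>i. d $ i > 0" and \<beta>: "\<forall>i. \<beta> $ i > 0"
    and h: "continuous_on UNIV h" "bounded (range h)"
    and h': "continuous_on UNIV h'" "bounded (range h')"
    and le: "\<And>t. h t \<le> h' t"
  shows "Gop c \<beta> d h t \<le> Gop c \<beta> d h' t"
  unfolding less_eq_vec_def Gop_nth
  using d \<beta> h h' le
  by (auto intro!: green_mono continuous_on_component bounded_range_vec_nth simp: less_eq_vec_def)

lemma mono_Gop:
  fixes h :: "real \<Rightarrow> real^'n"
  assumes d: "\<forall>i. d $ i > 0" and \<beta>: "\<forall>i. \<beta> $ i > 0"
    and h: "continuous_on UNIV h" "bounded (range h)" and "mono h"
  shows "mono (Gop c \<beta> d h)"
proof (rule monoI)
  fix s t :: real
  assume "s \<le> t"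
  have "mono (\<lambda>t. h t $ i)" for i
    using \<open>mono h\<close> by (auto simp: mono_def less_eq_vec_def)
  then have "mono (green c (\<beta> $ i) (d $ i) (\<lambda>s. h s $ i))" for i
    using d \<beta> h by (intro mono_green continuous_on_component bounded_range_vec_nth) auto
  then show "Gop c \<beta> d h s \<le> Gop c \<beta> d h t"
    using \<open>s \<le> t\<close> by (simp add: less_eq_vec_def Gop_nth monoD)
qed

section \<open>The operator H and the set Gamma\<close>

lemma vmul_diff: "vmul a (x - y) = vmul a x - vmul a y"
  by (simp add: vmul_def vec_eq_iff algebra_simps)

lemma wave_lhs_Hop: "wave_lhs f c d \<rho> r1 r2 t = vmul d r2 - c *\<^sub>R r1 - vmul \<beta> (\<rho> t) + Hop f c \<beta> \<rho> t"
  by (simp add: wave_lhs_def Hop_def)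

lemma continuous_on_fc_shift:
  assumes f: "continuous_functional \<tau> f" and \<psi>: "continuous_on UNIV \<psi>"
  shows "continuous_on UNIV (\<lambda>t. fc f c (shift \<psi> t))"
proof (intro continuous_at_imp_continuous_on ballI)
  fix t0 :: real
  have fc_shift: "fc f c (shift \<psi> t) = f (\<lambda>\<theta>. \<psi> (t + c * \<theta>))" for t
    by (simp add: fc_def shift_def)
  have cont: "continuous_on {- \<tau>..0} (\<lambda>\<theta>. \<psi> (t + c * \<theta>))" for t
    by (intro continuous_on_compose2[OF \<psi>] continuous_intros) auto
  show "isCont (\<lambda>t. fc f c (shift \<psi> t)) t0"
    unfolding continuous_at_eps_delta fc_shift
  proof (intro allI impI)
    fix e :: real
    assume "e > 0"
    then obtain \<delta> where \<delta>: "\<delta> > 0" "\<And>\<phi>. continuous_on {- \<tau>..0} \<phi> \<Longrightarrow>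
        \<forall>\<theta>\<in>{- \<tau>..0}. dist (\<phi> \<theta>) (\<psi> (t0 + c * \<theta>)) < \<delta> \<Longrightarrow> dist (f \<phi>) (f (\<lambda>\<theta>. \<psi> (t0 + c * \<theta>))) < e"
      using f cont[of t0] unfolding continuous_functional_def by meson
    define B where "B = cball t0 (\<bar>c\<bar> * \<tau> + 1)"
    have "uniformly_continuous_on B \<psi>"
      by (intro compact_uniformly_continuous continuous_on_subset[OF \<psi>]) (auto simp: B_def)
    then obtain \<eta> where \<eta>: "\<eta> > 0" "\<And>x x'. x \<in> B \<Longrightarrow> x' \<in> B \<Longrightarrow> dist x' x < \<eta> \<Longrightarrow> dist (\<psi> x') (\<psi> x) < \<delta>"
      unfolding uniformly_continuous_on_def using \<delta>(1) by metis
    have "dist (f (\<lambda>\<theta>. \<psi> (y + c * \<theta>))) (f (\<lambda>\<theta>. \<psi> (t0 + c * \<theta>))) < e" if y: "dist y t0 < min 1 \<eta>" for y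
    proof (rule \<delta>(2)[OF cont], intro ballI)
      fix \<theta> :: real
      assume "\<theta> \<in> {- \<tau>..0}"
      then have "\<bar>\<theta>\<bar> \<le> \<tau>"
        by simp
      then have "\<bar>c * \<theta>\<bar> \<le> \<bar>c\<bar> * \<tau>"
        by (simp add: abs_mult mult_left_mono)
      then have "t0 + c * \<theta> \<in> B" "y + c * \<theta> \<in> B"
        using y by (auto simp: B_def dist_real_def)
      moreover have "dist (y + c * \<theta>) (t0 + c * \<theta>) < \<eta>"
        using y by (simp add: dist_real_def)
      ultimately show "dist (\<psi> (y + c * \<theta>)) (\<psi> (t0 + c * \<theta>)) < \<delta>"
        by (rule \<eta>(2))
    qed
    then show "\<exists>d>0. \<forall>y. dist y t0 < d \<longrightarrow>
        dist (f (\<lambda>\<theta>. \<psi> (y + c * \<theta>))) (f (\<lambda>\<theta>. \<psi> (t0 + c * \<theta>))) < e"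
      using \<eta>(1) by (intro exI[of _ "min 1 \<eta>"]) auto
  qed
qed

lemma continuous_on_Hop:
  assumes "continuous_functional \<tau> f" and \<psi>: "continuous_on UNIV \<psi>"
  shows "continuous_on UNIV (Hop f c \<beta> \<psi>)"
  unfolding Hop_def vmul_def
  by (intro continuous_intros continuous_on_fc_shift[OF assms] continuous_on_vec_lambda
      continuous_on_component \<psi>)

definition quasi_monotone ::
  "((real \<Rightarrow> real^'n) \<Rightarrow> real^'n) \<Rightarrow> real \<Rightarrow> real \<Rightarrow> real^'n \<Rightarrow> real^'n \<Rightarrow> bool" where
  "quasi_monotone f c \<tau> \<beta> K \<longleftrightarrow>
     (\<forall>\<phi>' \<psi>'. continuous_on {-c*\<tau>..0} \<phi>' \<and> continuous_on {-c*\<tau>..0} \<psi>' \<and>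
         (\<forall>\<theta>\<in>{-c*\<tau>..0}. 0 \<le> \<psi>' \<theta> \<and> \<psi>' \<theta> \<le> \<phi>' \<theta> \<and> \<phi>' \<theta> \<le> K) \<longrightarrow>
         fc f c \<phi>' - fc f c \<psi>' + vmul \<beta> (\<phi>' 0 - \<psi>' 0) \<ge> 0)"

lemma Hop_le_Hop:
  assumes qm: "quasi_monotone f c \<tau> \<beta> K"
    and cont: "continuous_on UNIV \<phi>" "continuous_on UNIV \<psi>"
    and le: "\<And>s. 0 \<le> \<psi> s" "\<And>s. \<psi> s \<le> \<phi> s" "\<And>s. \<phi> s \<le> K"
  shows "Hop f c \<beta> \<psi> t \<le> Hop f c \<beta> \<phi> t"
proof -
  have "continuous_on S (shift \<phi> t)" "continuous_on S (shift \<psi> t)" for S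
    unfolding shift_def
    by (auto intro!: continuous_on_compose2[OF cont(1)] continuous_on_compose2[OF cont(2)] continuous_on_add)
  moreover have "0 \<le> shift \<psi> t \<theta> \<and> shift \<psi> t \<theta> \<le> shift \<phi> t \<theta> \<and> shift \<phi> t \<theta> \<le> K" for \<theta>
    using le by (simp add: shift_def)
  ultimately have "0 \<le> fc f c (shift \<phi> t) - fc f c (shift \<psi> t) + vmul \<beta> (shift \<phi> t 0 - shift \<psi> t 0)"
    using qm unfolding quasi_monotone_def by blast
  also have "\<dots> = Hop f c \<beta> \<phi> t - Hop f c \<beta> \<psi> t"
    by (simp add: Hop_def shift_def vmul_diff)
  finally show ?thesis
    by simp
qed

lemma bounded_range_Hop:
  assumes qm: "quasi_monotone f c \<tau> \<beta> K" and f0: "f (const_fun 0) = 0" and fK: "f (const_fun K) = 0"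
    and \<psi>: "continuous_on UNIV \<psi>" "\<And>s. 0 \<le> \<psi> s" "\<And>s. \<psi> s \<le> K"
  shows "bounded (range (Hop f c \<beta> \<psi>))"
proof -
  have "Hop f c \<beta> (\<lambda>_. 0) t \<le> Hop f c \<beta> \<psi> t" "Hop f c \<beta> \<psi> t \<le> Hop f c \<beta> (\<lambda>_. K) t" for t
    using \<psi> order_trans by (intro Hop_le_Hop[OF qm]; fastforce)+
  moreover have "Hop f c \<beta> (\<lambda>_. 0) t = 0" "Hop f c \<beta> (\<lambda>_. K) t = vmul \<beta> K" for t
    using f0 fK by (simp_all add: Hop_def fc_def shift_def const_fun_def vmul_def vec_eq_iff)
  ultimately have "range (Hop f c \<beta> \<psi>) \<subseteq> {0..vmul \<beta> K}"
    by auto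
  then show ?thesis
    by (rule bounded_subset[rotated]) simp
qed

lemma mono_Hop:
  assumes qm: "quasi_monotone f c \<tau> \<beta> K"
    and \<psi>: "continuous_on UNIV \<psi>" "mono \<psi>" "\<And>s. 0 \<le> \<psi> s" "\<And>s. \<psi> s \<le> K"
  shows "mono (Hop f c \<beta> \<psi>)"
proof (rule monoI)
  fix s t :: real
  assume "s \<le> t"
  have "Hop f c \<beta> \<psi> s = Hop f c \<beta> (\<lambda>x. \<psi> (x + (s - t))) t"
    by (simp add: Hop_def shift_def algebra_simps)
  also have "\<dots> \<le> Hop f c \<beta> \<psi> t"
    using \<psi> \<open>s \<le> t\<close>
    by (intro Hop_le_Hop[OF qm] continuous_on_compose2[OF \<psi>(1)] continuous_intros) (auto intro: monoD)
  finally show "Hop f c \<beta> \<psi> s \<le> Hop f c \<beta> \<psi> t" .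
qed

lemma Gamma_set_bounds:
  assumes "\<phi> \<in> Gamma_set K"
  shows "0 \<le> \<phi> t" and "\<phi> t \<le> K"
proof -
  have mono: "mono \<phi>" and lim: "(\<phi> \<longlongrightarrow> 0) at_bot" "(\<phi> \<longlongrightarrow> K) at_top"
    using assms unfolding Gamma_set_def by auto
  have ev: "\<forall>\<^sub>F s in at_bot. \<phi> s $ i \<le> \<phi> t $ i" "\<forall>\<^sub>F s in at_top. \<phi> t $ i \<le> \<phi> s $ i" for i
    unfolding eventually_at_bot_linorder eventually_at_top_linorder
    using monoD[OF mono] by (auto intro!: exI[of _ t] simp: less_eq_vec_def)
  have "0 $ i \<le> \<phi> t $ i" "\<phi> t $ i \<le> K $ i" for i
    using tendsto_upperbound[OF tendsto_vec_nth[OF lim(1)] ev(1)]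
      tendsto_lowerbound[OF tendsto_vec_nth[OF lim(2)] ev(2)] by simp_all
  then show "0 \<le> \<phi> t" "\<phi> t \<le> K"
    by (simp_all add: less_eq_vec_def)
qed

lemma Gamma_set_squeeze:
  assumes "\<phi> \<in> Gamma_set K" and "\<phi>0 \<in> Gamma_set K"
    and "continuous_on UNIV \<psi>" and "mono \<psi>" and le: "\<And>t. \<phi> t \<le> \<psi> t" "\<And>t. \<psi> t \<le> \<phi>0 t"
  shows "\<psi> \<in> Gamma_set K"
proof -
  have lim: "(\<phi> \<longlongrightarrow> 0) at_bot" "(\<phi>0 \<longlongrightarrow> 0) at_bot" "(\<phi> \<longlongrightarrow> K) at_top" "(\<phi>0 \<longlongrightarrow> K) at_top"
    using assms(1,2) by (auto simp: Gamma_set_def)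
  have le_nth: "\<phi> t $ i \<le> \<psi> t $ i" "\<psi> t $ i \<le> \<phi>0 t $ i" for t i
    using le by (simp_all add: less_eq_vec_def)
  have "((\<lambda>x. \<psi> x $ i) \<longlongrightarrow> 0 $ i) at_bot" for i
    by (rule tendsto_sandwich[OF _ _ tendsto_vec_nth[OF lim(1)] tendsto_vec_nth[OF lim(2)]])
       (simp_all add: le_nth)
  moreover have "((\<lambda>x. \<psi> x $ i) \<longlongrightarrow> K $ i) at_top" for i
    by (rule tendsto_sandwich[OF _ _ tendsto_vec_nth[OF lim(3)] tendsto_vec_nth[OF lim(4)]])
       (simp_all add: le_nth)
  ultimately show ?thesis
    using assms(3,4) unfolding Gamma_set_def by (auto intro: vec_tendstoI)
qed

lemma Hop_Gamma_set:
  assumes f: "continuous_functional \<tau> f" and qm: "quasi_monotone f c \<tau> \<beta> K"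
    and f0: "f (const_fun 0) = 0" and fK: "f (const_fun K) = 0" and \<phi>: "\<phi> \<in> Gamma_set K"
  shows "continuous_on UNIV (Hop f c \<beta> \<phi>)" and "bounded (range (Hop f c \<beta> \<phi>))"
    and "mono (Hop f c \<beta> \<phi>)"
proof -
  have "continuous_on UNIV \<phi>" "mono \<phi>"
    using \<phi> by (auto simp: Gamma_set_def)
  then show "continuous_on UNIV (Hop f c \<beta> \<phi>)" "bounded (range (Hop f c \<beta> \<phi>))"
    "mono (Hop f c \<beta> \<phi>)"
    using Gamma_set_bounds[OF \<phi>]
    by (auto intro: continuous_on_Hop[OF f] bounded_range_Hop[OF qm f0 fK] mono_Hop[OF qm])
qed

lemma Gop_Hop_le_quasi_upper_solution:
  assumes d: "\<forall>i. d $ i > 0" and \<beta>: "\<forall>i. \<beta> $ i > 0"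
    and H: "continuous_on UNIV (Hop f c \<beta> \<phi>)" "bounded (range (Hop f c \<beta> \<phi>))"
    and "quasi_upper_solution f c d \<phi>"
  shows "Gop c \<beta> d (Hop f c \<beta> \<phi>) t \<le> \<phi> t"
proof -
  obtain \<rho>' \<rho>'' where "quasi_solution_regular \<phi> \<rho>' \<rho>''"
    and "\<And>t. t \<noteq> 0 \<Longrightarrow> wave_lhs f c d \<phi> (\<rho>' t) (\<rho>'' t) t \<le> 0"
    using assms(5) unfolding quasi_upper_solution_def by blast
  then show ?thesis
    by (intro Gop_le_quasi_supersolution[OF d \<beta> H]) (simp_all add: wave_lhs_Hop[where \<beta> = \<beta>])
qed

lemma quasi_lower_solution_le_Gop_Hop:
  assumes d: "\<forall>i. d $ i > 0" and \<beta>: "\<forall>i. \<beta> $ i > 0"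
    and H: "continuous_on UNIV (Hop f c \<beta> \<phi>)" "bounded (range (Hop f c \<beta> \<phi>))"
    and "quasi_lower_solution f c d \<phi>"
  shows "\<phi> t \<le> Gop c \<beta> d (Hop f c \<beta> \<phi>) t"
proof -
  obtain \<rho>' \<rho>'' where "quasi_solution_regular \<phi> \<rho>' \<rho>''"
    and "\<And>t. t \<noteq> 0 \<Longrightarrow> 0 \<le> wave_lhs f c d \<phi> (\<rho>' t) (\<rho>'' t) t"
    using assms(5) unfolding quasi_lower_solution_def by blast
  then show ?thesis
    by (intro quasi_subsolution_le_Gop[OF d \<beta> H]) (simp_all add: wave_lhs_Hop[where \<beta> = \<beta>])
qed

lemma continuous_on_Gop:
  assumes "\<forall>i. d $ i > 0" and "\<forall>i. \<beta> $ i > 0"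
    and "continuous_on UNIV h" "bounded (range h)"
  shows "continuous_on UNIV (Gop c \<beta> d h)"
proof -
  obtain \<rho>' where "\<And>t. (Gop c \<beta> d h has_vector_derivative \<rho>' t) (at t)"
    using Gop_solution[OF assms] by metis
  then show ?thesis
    by (meson continuous_at_imp_continuous_on has_vector_derivative_continuous)
qed

lemma upper_solution_Gop_Hop:
  assumes d: "\<forall>i. d $ i > 0" and \<beta>: "\<forall>i. \<beta> $ i > 0" and qm: "quasi_monotone f c \<tau> \<beta> K"
    and H: "continuous_on UNIV (Hop f c \<beta> \<phi>)" "bounded (range (Hop f c \<beta> \<phi>))"
    and \<phi>: "continuous_on UNIV \<phi>" "\<And>t. \<phi> t \<le> K"
    and bounds: "\<And>t. 0 \<le> Gop c \<beta> d (Hop f c \<beta> \<phi>) t" "\<And>t. Gop c \<beta> d (Hop f c \<beta> \<phi>) t \<le> \<phi> t"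
  shows "upper_solution f c d (Gop c \<beta> d (Hop f c \<beta> \<phi>))"
proof -
  define \<phi>1 where "\<phi>1 = Gop c \<beta> d (Hop f c \<beta> \<phi>)"
  obtain \<rho>' \<rho>'' where sol: "\<And>t. (\<phi>1 has_vector_derivative \<rho>' t) (at t)"
    "\<And>t. (\<rho>' has_vector_derivative \<rho>'' t) (at t)" "continuous_on UNIV \<rho>''"
    "bounded (range \<phi>1)" "bounded (range \<rho>')" "bounded (range \<rho>'')"
    "\<And>t. vmul d (\<rho>'' t) - c *\<^sub>R \<rho>' t - vmul \<beta> (\<phi>1 t) + Hop f c \<beta> \<phi> t = 0"
    unfolding \<phi>1_def using Gop_solution[OF d \<beta> H] by metis
  have "wave_lhs f c d \<phi>1 (\<rho>' t) (\<rho>'' t) t \<le> 0" for t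
  proof -
    have "wave_lhs f c d \<phi>1 (\<rho>' t) (\<rho>'' t) t = Hop f c \<beta> \<phi>1 t - Hop f c \<beta> \<phi> t"
      using sol(7)[of t] by (simp add: wave_lhs_Hop[where \<beta> = \<beta>] algebra_simps)
    also have "\<dots> \<le> 0"
      using \<phi> bounds continuous_on_Gop[OF d \<beta> H]
      by (simp add: Hop_le_Hop[OF qm] \<phi>1_def)
    finally show ?thesis .
  qed
  then show ?thesis
    unfolding upper_solution_def \<phi>1_def[symmetric] using sol(1-6) by blast
qed

theorem mainTheorem2:
  fixes \<tau> c :: real and d \<beta> K :: "real^'n"
    and f :: "(real \<Rightarrow> real^'n) \<Rightarrow> real^'n"
    and \<phi> \<phi>0 :: "real \<Rightarrow> real^'n"
  assumes tau: "\<tau> \<ge> 0" and c: "c > 0"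
    and d: "\<forall>i. d$i > 0" and K: "\<forall>i. K$i > 0" and beta: "\<forall>i. \<beta>$i > 0"
    and f_local: "local_functional \<tau> f"
    and f_cont: "continuous_functional \<tau> f"
    and f0: "f (const_fun 0) = 0" and fK: "f (const_fun K) = 0"
    and f_nz: "\<forall>u\<in>{0..K} - {0, K}. f (const_fun u) \<noteq> 0"
    and quasi_mono: "\<forall>\<phi>' \<psi>'. continuous_on {-c*\<tau>..0} \<phi>' \<and> continuous_on {-c*\<tau>..0} \<psi>' \<and>
         (\<forall>\<theta>\<in>{-c*\<tau>..0}. 0 \<le> \<psi>' \<theta> \<and> \<psi>' \<theta> \<le> \<phi>' \<theta> \<and> \<phi>' \<theta> \<le> K) \<longrightarrow>
         fc f c \<phi>' - fc f c \<psi>' + vmul \<beta> (\<phi>' 0 - \<psi>' 0) \<ge> 0"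
    and phi: "\<phi> \<in> Gamma_set K" and phi0: "\<phi>0 \<in> Gamma_set K"
    and lower: "quasi_lower_solution f c d \<phi>"
    and upper: "quasi_upper_solution f c d \<phi>0"
    and le: "\<forall>t. \<phi> t \<le> \<phi>0 t"
  shows "Gop c \<beta> d (Hop f c \<beta> \<phi>0) \<in> Gamma_set K
    \<and> upper_solution f c d (Gop c \<beta> d (Hop f c \<beta> \<phi>0))
    \<and> (\<forall>t. \<phi> t \<le> Gop c \<beta> d (Hop f c \<beta> \<phi>0) t \<and> Gop c \<beta> d (Hop f c \<beta> \<phi>0) t \<le> \<phi>0 t)"
proof -
  have qm: "quasi_monotone f c \<tau> \<beta> K"
    using quasi_mono unfolding quasi_monotone_def .
  note H = Hop_Gamma_set[OF f_cont qm f0 fK phi] and H0 = Hop_Gamma_set[OF f_cont qm f0 fK phi0]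
  note bounds = Gamma_set_bounds[OF phi] Gamma_set_bounds[OF phi0]
  have cont: "continuous_on UNIV \<phi>" "continuous_on UNIV \<phi>0"
    using phi phi0 by (auto simp: Gamma_set_def)
  have le_\<phi>0: "Gop c \<beta> d (Hop f c \<beta> \<phi>0) t \<le> \<phi>0 t" for t
    by (rule Gop_Hop_le_quasi_upper_solution[OF d beta H0(1,2) upper])
  have \<phi>_le: "\<phi> t \<le> Gop c \<beta> d (Hop f c \<beta> \<phi>0) t" for t
  proof -
    have "\<phi> t \<le> Gop c \<beta> d (Hop f c \<beta> \<phi>) t"
      by (rule quasi_lower_solution_le_Gop_Hop[OF d beta H(1,2) lower])
    also have "\<dots> \<le> Gop c \<beta> d (Hop f c \<beta> \<phi>0) t"
      using bounds le by (intro Gop_mono[OF d beta H(1,2) H0(1,2)] Hop_le_Hop[OF qm cont(2,1)]) simp_all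
    finally show ?thesis .
  qed
  have "Gop c \<beta> d (Hop f c \<beta> \<phi>0) \<in> Gamma_set K"
    by (rule Gamma_set_squeeze[OF phi phi0 continuous_on_Gop[OF d beta H0(1,2)]
          mono_Gop[OF d beta H0] \<phi>_le le_\<phi>0])
  moreover have "upper_solution f c d (Gop c \<beta> d (Hop f c \<beta> \<phi>0))"
    using Gamma_set_bounds[OF calculation] bounds le_\<phi>0
    by (intro upper_solution_Gop_Hop[OF d beta qm H0(1,2) cont(2)]) simp_all
  ultimately show ?thesis
    using \<phi>_le le_\<phi>0 by blast
qed

end
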